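(* Let $\mathfrak{g}_1,\mathfrak{g}_2$ be nilpotent Lie algebras of dimensions $m_1,m_2$ with $n_1,n_2$ generators as below. If $\mathfrak{g}_i$ is nonsplit for $i=1,2$, then the product by generators $\mathfrak{g}_1\underline{\times}\mathfrak{g}_2$ is an $(m_1+m_2+n_1n_2)$-dimensional nonsplit Lie algebra of nilindex $\max\{n(\mathfrak{g}_1),n(\mathfrak{g}_2)\}$.
   Context: All Lie algebras are finite-dimensional, complex, nilpotent and nonabelian. $C^1\mathfrak{g}=[\mathfrak{g},\mathfrak{g}]$, $C^{k+1}\mathfrak{g}=[\mathfrak{g},C^k\mathfrak{g}]$; the nilindex $n(\mathfrak{g})$ is the length of this central descending sequence (least $k$ with $C^k\mathfrak{g}=0$). A Lie algebra is nonsplit if it is not the direct sum of two nonzero ideals. Product by generators: take bases $\{X_1,\dots,X_{m_1}\}$ of $\mathfrak{g}_1$ and $\{X'_1,\dots,X'_{m_2}\}$ of $\mathfrak{g}_2$ such that $X_1,\dots,X_{n_1}$ generate $\mathfrak{g}_1$ and $X_{n_1+1},\dots,X_{m_1}$ span $C^1\mathfrak{g}_1$, and similarly $X'_1,\dots,X'_{n_2}$ generate $\mathfrak{g}_2$ and the remaining $X'_j$ span $C^1\mathfrak{g}_2$. Then $\mathfrak{g}_1\underline{\times}\mathfrak{g}_2$ is the Lie algebra on $\mathfrak{g}_1\oplus\mathfrak{g}_2\oplus\langle Z_1,\dots,Z_{n_1n_2}\rangle$ with the brackets of $\mathfrak{g}_1$ and of $\mathfrak{g}_2$, $[X_i,X'_j]=Z_{(i-1)n_2+j}$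 for $1\le i\le n_1$, $1\le j\le n_2$, $[X_i,X'_j]=0$ if $i>n_1$ or $j>n_2$, and the $Z_k$ central (the central extension of $\mathfrak{g}_1\oplus\mathfrak{g}_2$ by the corresponding 2-cocycle). *)

theory Defs
  imports Complex_Main
begin

text \<open>A finite-dimensional complex Lie algebra of dimension m is given by structure
constants c i j k w.r.t. the basis e_0,...,e_{m-1}: [e_i,e_j] = sum_k c i j k e_k.\<close>

definition vecs :: "nat \<Rightarrow> (nat \<Rightarrow> complex) set" where
  "vecs m = {v. \<forall>i\<ge>m. v i = 0}"

definition bvec :: "nat \<Rightarrow> nat \<Rightarrow> complex" where
  "bvec i = (\<lambda>k. if k = i then 1 else 0)"

definition br :: "(nat \<Rightarrow> nat \<Rightarrow> nat \<Rightarrow> complex) \<Rightarrow> nat \<Rightarrow>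
    (nat \<Rightarrow> complex) \<Rightarrow> (nat \<Rightarrow> complex) \<Rightarrow> nat \<Rightarrow> complex" where
  "br c m x y = (\<lambda>k. if k < m then (\<Sum>i<m. \<Sum>j<m. x i * y j * c i j k) else 0)"

definition is_lie_alg :: "(nat \<Rightarrow> nat \<Rightarrow> nat \<Rightarrow> complex) \<Rightarrow> nat \<Rightarrow> bool" where
  "is_lie_alg c m \<longleftrightarrow>
     (\<forall>x\<in>vecs m. br c m x x = (\<lambda>_. 0)) \<and>
     (\<forall>x\<in>vecs m. \<forall>y\<in>vecs m. \<forall>z\<in>vecs m.
        (\<lambda>k. br c m x (br c m y z) k + br c m y (br c m z x) k + br c m z (br c m x y) k)
          = (\<lambda>_. 0))"

definition lin_span :: "(nat \<Rightarrow> complex) set \<Rightarrow> (nat \<Rightarrow> complex) set" where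
  "lin_span S = {v. \<exists>F a. finite F \<and> F \<subseteq> S \<and> v = (\<lambda>k. \<Sum>x\<in>F. a x * x k)}"

definition subspace_of :: "nat \<Rightarrow> (nat \<Rightarrow> complex) set \<Rightarrow> bool" where
  "subspace_of m A \<longleftrightarrow> A \<subseteq> vecs m \<and> (\<lambda>_. 0) \<in> A \<and>
     (\<forall>x\<in>A. \<forall>y\<in>A. (\<lambda>k. x k + y k) \<in> A) \<and> (\<forall>a. \<forall>x\<in>A. (\<lambda>k. a * x k) \<in> A)"

definition subalgebra :: "(nat \<Rightarrow> nat \<Rightarrow> nat \<Rightarrow> complex) \<Rightarrow> nat \<Rightarrow> (nat \<Rightarrow> complex) set \<Rightarrow> bool" where
  "subalgebra c m A \<longleftrightarrow> subspace_of m A \<and> (\<forall>x\<in>A. \<forall>y\<in>A. br c m x y \<in> A)"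

definition lie_ideal :: "(nat \<Rightarrow> nat \<Rightarrow> nat \<Rightarrow> complex) \<Rightarrow> nat \<Rightarrow> (nat \<Rightarrow> complex) set \<Rightarrow> bool" where
  "lie_ideal c m I \<longleftrightarrow> subspace_of m I \<and> (\<forall>x\<in>vecs m. \<forall>y\<in>I. br c m x y \<in> I)"

definition generated :: "(nat \<Rightarrow> nat \<Rightarrow> nat \<Rightarrow> complex) \<Rightarrow> nat \<Rightarrow> (nat \<Rightarrow> complex) set \<Rightarrow> (nat \<Rightarrow> complex) set" where
  "generated c m S = \<Inter>{A. subalgebra c m A \<and> S \<subseteq> A}"

fun lcs :: "(nat \<Rightarrow> nat \<Rightarrow> nat \<Rightarrow> complex) \<Rightarrow> nat \<Rightarrow> nat \<Rightarrow> (nat \<Rightarrow> complex) set" where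
  "lcs c m 0 = vecs m"
| "lcs c m (Suc k) = lin_span {br c m x y | x y. x \<in> vecs m \<and> y \<in> lcs c m k}"

definition nilpotent_lie :: "(nat \<Rightarrow> nat \<Rightarrow> nat \<Rightarrow> complex) \<Rightarrow> nat \<Rightarrow> bool" where
  "nilpotent_lie c m \<longleftrightarrow> (\<exists>k. lcs c m k = {\<lambda>_. 0})"

definition nilindex :: "(nat \<Rightarrow> nat \<Rightarrow> nat \<Rightarrow> complex) \<Rightarrow> nat \<Rightarrow> nat" where
  "nilindex c m = (LEAST k. lcs c m k = {\<lambda>_. 0})"

definition nonabelian :: "(nat \<Rightarrow> nat \<Rightarrow> nat \<Rightarrow> complex) \<Rightarrow> nat \<Rightarrow> bool" where
  "nonabelian c m \<longleftrightarrow> lcs c m 1 \<noteq> {\<lambda>_. 0}"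

definition nonsplit :: "(nat \<Rightarrow> nat \<Rightarrow> nat \<Rightarrow> complex) \<Rightarrow> nat \<Rightarrow> bool" where
  "nonsplit c m \<longleftrightarrow> \<not> (\<exists>I J. lie_ideal c m I \<and> lie_ideal c m J \<and>
      I \<noteq> {\<lambda>_. 0} \<and> J \<noteq> {\<lambda>_. 0} \<and> I \<inter> J = {\<lambda>_. 0} \<and>
      {(\<lambda>k. x k + y k) | x y. x \<in> I \<and> y \<in> J} = vecs m)"

definition adapted :: "(nat \<Rightarrow> nat \<Rightarrow> nat \<Rightarrow> complex) \<Rightarrow> nat \<Rightarrow> nat \<Rightarrow> bool" where
  "adapted c m n \<longleftrightarrow> n \<le> m \<and> generated c m (bvec ` {..<n}) = vecs m \<and>
      lin_span (bvec ` {n..<m}) = lcs c m 1"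

text \<open>Product by generators. Basis indices: 0..<m1 for g1 (X_i), m1..<m1+m2 for g2 (X'_j),
  m1+m2+i*n2+j for Z_{(i)n2+j} (0-based), so [X_i, X'_j] = Z.\<close>
definition prod_gen :: "(nat \<Rightarrow> nat \<Rightarrow> nat \<Rightarrow> complex) \<Rightarrow> nat \<Rightarrow> nat \<Rightarrow>
   (nat \<Rightarrow> nat \<Rightarrow> nat \<Rightarrow> complex) \<Rightarrow> nat \<Rightarrow> nat \<Rightarrow> (nat \<Rightarrow> nat \<Rightarrow> nat \<Rightarrow> complex)" where
  "prod_gen c1 m1 n1 c2 m2 n2 = (\<lambda>i j k.
     if i < m1 \<and> j < m1 then (if k < m1 then c1 i j k else 0)
     else if m1 \<le> i \<and> i < m1 + m2 \<and> m1 \<le> j \<and> j < m1 + m2 then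
       (if m1 \<le> k \<and> k < m1 + m2 then c2 (i - m1) (j - m1) (k - m1) else 0)
     else if i < n1 \<and> m1 \<le> j \<and> j < m1 + n2 then
       (if k = m1 + m2 + i * n2 + (j - m1) then 1 else 0)
     else if j < n1 \<and> m1 \<le> i \<and> i < m1 + n2 then
       (if k = m1 + m2 + j * n2 + (i - m1) then -1 else 0)
     else 0)"

end

theory Submission
  imports Defs
begin

text \<open>Write the bracket of the product as [x, y] = [x1, y1] + [x2, y2] + z(x, y), where x1, x2
  are the components of x in g1 and g2 and the Z-coordinates of z(x, y) are the products
  x_i y'_j - x'_j y_i of generator coordinates. Since C^1 g1 and C^1 g2 are spanned by
  non-generators, brackets have no generator coordinates, so z(x, y) vanishes as soon as y is a
  bracket. Hence the Jacobi identity reduces to those of the factors, C^1 of the product is the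
  set of vectors without generator coordinates, and C^k is C^k g1 + C^k g2 for k \<ge> 2; this
  gives nilpotency and the nilindex max (n g1) (n g2).

  If the product were I \<oplus> J, then [I, J] \<subseteq> I \<inter> J = 0 and the Z-coordinates give
  p_i q'_j = q_i p'_j for p \<in> I and q \<in> J. Decomposing X_1 and X'_1 along I \<oplus> J shows that one
  of the ideals has no generator coordinates, i.e. lies in the derived algebra; but in a
  nilpotent Lie algebra such a direct summand is zero.\<close>

section \<open>Subspaces, spans and linear maps\<close>

definition lin_closed :: "(nat \<Rightarrow> complex) set \<Rightarrow> bool" where
  "lin_closed B \<longleftrightarrow> (\<lambda>_. 0) \<in> B \<and> (\<forall>x\<in>B. \<forall>y\<in>B. (\<lambda>k. x k + y k) \<in> B) \<and>
     (\<forall>a. \<forall>x\<in>B. (\<lambda>k. a * x k) \<in> B)"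

lemma lin_closedD:
  assumes "lin_closed B"
  shows lin_closed_zero: "(\<lambda>_. 0) \<in> B"
    and lin_closed_add: "x \<in> B \<Longrightarrow> y \<in> B \<Longrightarrow> (\<lambda>k. x k + y k) \<in> B"
    and lin_closed_scale: "x \<in> B \<Longrightarrow> (\<lambda>k. a * x k) \<in> B"
  using assms unfolding lin_closed_def by blast+

lemma lin_closed_diff:
  assumes "lin_closed B" "x \<in> B" "y \<in> B"
  shows "(\<lambda>k. x k - y k) \<in> B"
  using lin_closed_add[OF assms(1,2) lin_closed_scale[OF assms(1,3), of "-1"]] by simp

lemma lin_closed_Int: "lin_closed A \<Longrightarrow> lin_closed B \<Longrightarrow> lin_closed (A \<inter> B)"
  unfolding lin_closed_def by blast

lemma lin_closed_vecs: "lin_closed (vecs m)"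
  unfolding lin_closed_def vecs_def by simp

lemma lin_closed_coords_zero: "lin_closed {v. \<forall>i\<in>A. v i = 0}"
  unfolding lin_closed_def by simp

lemma subspace_of_iff: "subspace_of m A \<longleftrightarrow> A \<subseteq> vecs m \<and> lin_closed A"
  unfolding subspace_of_def lin_closed_def by blast

lemma lin_span_base: "x \<in> S \<Longrightarrow> x \<in> lin_span S"
  unfolding lin_span_def by (intro CollectI exI[of _ "{x}"] exI[of _ "\<lambda>_. 1"]) auto

lemma lin_closed_lin_span: "lin_closed (lin_span S)"
  unfolding lin_closed_def
proof (intro conjI ballI allI)
  show "(\<lambda>_. 0) \<in> lin_span S"
    unfolding lin_span_def by (intro CollectI exI[of _ "{}"]) auto
next
  fix x y assume "x \<in> lin_span S" "y \<in> lin_span S"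
  then obtain F a G b where F: "finite F" "F \<subseteq> S" "x = (\<lambda>k. \<Sum>z\<in>F. a z * z k)"
    and G: "finite G" "G \<subseteq> S" "y = (\<lambda>k. \<Sum>z\<in>G. b z * z k)"
    unfolding lin_span_def by blast
  define c where "c z = (if z \<in> F then a z else 0) + (if z \<in> G then b z else 0)" for z
  have extend: "(\<Sum>z\<in>H. d z * z k) = (\<Sum>z\<in>F \<union> G. (if z \<in> H then d z else 0) * z k)"
    if "H \<subseteq> F \<union> G" for H d k
    using F G that by (intro sum.mono_neutral_cong_left) auto
  have "x k + y k = (\<Sum>z\<in>F \<union> G. c z * z k)" for k
    unfolding F(3) G(3) c_def distrib_right sum.distrib
    by (simp only: extend[OF Un_upper1, symmetric] extend[OF Un_upper2, symmetric])
  then show "(\<lambda>k. x k + y k) \<in> lin_span S"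
    unfolding lin_span_def using F G by (intro CollectI exI[of _ "F \<union> G"] exI[of _ c]) auto
next
  fix d x assume "x \<in> lin_span S"
  then obtain F a where F: "finite F" "F \<subseteq> S" "x = (\<lambda>k. \<Sum>z\<in>F. a z * z k)"
    unfolding lin_span_def by blast
  then show "(\<lambda>k. d * x k) \<in> lin_span S"
    unfolding lin_span_def
    by (intro CollectI exI[of _ F] exI[of _ "\<lambda>z. d * a z"]) (simp add: sum_distrib_left mult.assoc)
qed

lemma lin_closed_sum:
  assumes "lin_closed B" "finite F" "\<And>z. z \<in> F \<Longrightarrow> f z \<in> B"
  shows "(\<lambda>k. \<Sum>z\<in>F. f z k) \<in> B"
  using assms(2,3)
proof (induction F rule: finite_induct)
  case empty
  then show ?case using lin_closed_zero[OF assms(1)] by simp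
next
  case (insert z F)
  then show ?case using lin_closed_add[OF assms(1)] by simp
qed

lemma lin_span_least:
  assumes "lin_closed B" "S \<subseteq> B"
  shows "lin_span S \<subseteq> B"
proof
  fix v assume "v \<in> lin_span S"
  then obtain F a where "finite F" "F \<subseteq> S" "v = (\<lambda>k. \<Sum>z\<in>F. (\<lambda>k. a z * z k) k)"
    unfolding lin_span_def by auto
  then show "v \<in> B"
    using assms by (auto intro!: lin_closed_sum lin_closed_scale)
qed

lemma lin_span_mono: "S \<subseteq> T \<Longrightarrow> lin_span S \<subseteq> lin_span T"
  by (rule lin_span_least[OF lin_closed_lin_span]) (auto intro: lin_span_base)

lemma lin_span_subset_zero:
  assumes "S \<subseteq> {\<lambda>_. 0}"
  shows "lin_span S = {\<lambda>_. 0}"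
proof -
  have "lin_closed {\<lambda>_. 0}" unfolding lin_closed_def by simp
  then show ?thesis
    using lin_span_least[of "{\<lambda>_. 0}" S] lin_closed_zero[OF lin_closed_lin_span, of S] assms
    by blast
qed

lemma mem_lin_closed_if_support:
  assumes "lin_closed B" "v \<in> vecs m" "\<And>t. t < m \<Longrightarrow> v t \<noteq> 0 \<Longrightarrow> bvec t \<in> B"
  shows "v \<in> B"
proof -
  define N where "N = {t. t < m \<and> v t \<noteq> 0}"
  have "(\<Sum>t\<in>N. v t * bvec t k) = (\<Sum>t\<in>N. if t = k then v t else 0)" for k
    by (rule sum.cong) (auto simp: bvec_def)
  also have "\<dots> k = v k" for k
    using assms(2) by (auto simp: N_def vecs_def)
  finally have "v = (\<lambda>k. \<Sum>t\<in>N. (\<lambda>k. v t * bvec t k) k)" by auto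
  also have "\<dots> \<in> B"
    by (rule lin_closed_sum[OF assms(1)]) (auto simp: N_def intro: lin_closed_scale[OF assms(1)] assms(3))
  finally show ?thesis .
qed

lemma bvec_in_vecs: "t < m \<Longrightarrow> bvec t \<in> vecs m"
  unfolding bvec_def vecs_def by auto

definition lin_map :: "((nat \<Rightarrow> complex) \<Rightarrow> nat \<Rightarrow> complex) \<Rightarrow> bool" where
  "lin_map f \<longleftrightarrow> (\<forall>x y. f (\<lambda>k. x k + y k) = (\<lambda>k. f x k + f y k)) \<and>
     (\<forall>a x. f (\<lambda>k. a * x k) = (\<lambda>k. a * f x k))"

lemma lin_map_zero:
  assumes "lin_map f"
  shows "f (\<lambda>_. 0) = (\<lambda>_. 0)"
proof -
  have "\<forall>a x. f (\<lambda>k. a * x k) = (\<lambda>k. a * f x k)"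
    using assms unfolding lin_map_def by blast
  from this[rule_format, of 0 "\<lambda>_. 0"] show ?thesis by simp
qed

lemma lin_span_image_subset:
  assumes "lin_map f" "lin_closed B" "f ` S \<subseteq> B"
  shows "f ` lin_span S \<subseteq> B"
proof -
  have "lin_closed (f -` B)"
    using assms(1,2) lin_map_zero[OF assms(1)]
    unfolding lin_closed_def lin_map_def by simp
  then show ?thesis
    using lin_span_least[of "f -` B" S] assms(3) by blast
qed

definition sum_set :: "(nat \<Rightarrow> complex) set \<Rightarrow> (nat \<Rightarrow> complex) set \<Rightarrow> (nat \<Rightarrow> complex) set" where
  "sum_set A B = {(\<lambda>k. x k + y k) | x y. x \<in> A \<and> y \<in> B}"

lemma sum_setI: "x \<in> A \<Longrightarrow> y \<in> B \<Longrightarrow> (\<lambda>k. x k + y k) \<in> sum_set A B"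
  unfolding sum_set_def by blast

lemma sum_setE:
  assumes "v \<in> sum_set A B"
  obtains x y where "x \<in> A" "y \<in> B" "v = (\<lambda>k. x k + y k)"
  using assms unfolding sum_set_def by blast

lemma sum_set_commute: "sum_set A B = sum_set B A"
proof -
  have "v \<in> sum_set B A" if v: "v \<in> sum_set A B" for A B v
  proof -
    obtain x y where "x \<in> A" "y \<in> B" "v = (\<lambda>k. y k + x k)"
      using v by (auto simp: add.commute elim: sum_setE)
    then show ?thesis by (simp add: sum_setI)
  qed
  then show ?thesis by blast
qed

lemma lin_closed_sum_set:
  assumes "lin_closed A" "lin_closed B"
  shows "lin_closed (sum_set A B)"
  unfolding lin_closed_def
proof (intro conjI ballI allI)
  show "(\<lambda>_. 0) \<in> sum_set A B"
    using sum_setI[OF lin_closed_zero[OF assms(1)] lin_closed_zero[OF assms(2)]] by simp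
next
  fix u v assume "u \<in> sum_set A B" "v \<in> sum_set A B"
  then obtain x y x' y' where "x \<in> A" "y \<in> B" "u = (\<lambda>k. x k + y k)"
    and "x' \<in> A" "y' \<in> B" "v = (\<lambda>k. x' k + y' k)"
    by (elim sum_setE)
  then have "(\<lambda>k. (x k + x' k) + (y k + y' k)) \<in> sum_set A B"
    by (intro sum_setI lin_closed_add[OF assms(1)] lin_closed_add[OF assms(2)])
  then show "(\<lambda>k. u k + v k) \<in> sum_set A B"
    using \<open>u = _\<close> \<open>v = _\<close> by (simp add: ac_simps)
next
  fix a u assume "u \<in> sum_set A B"
  then obtain x y where "x \<in> A" "y \<in> B" "u = (\<lambda>k. x k + y k)"
    by (elim sum_setE)
  then have "(\<lambda>k. a * x k + a * y k) \<in> sum_set A B"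
    by (intro sum_setI lin_closed_scale[OF assms(1)] lin_closed_scale[OF assms(2)])
  then show "(\<lambda>k. a * u k) \<in> sum_set A B"
    using \<open>u = _\<close> by (simp add: distrib_left)
qed

section \<open>Lie algebras given by structure constants\<close>

lemma br_in_vecs: "br c m x y \<in> vecs m"
  unfolding vecs_def br_def by simp

lemma br_zero_left: "br c m (\<lambda>_. 0) y = (\<lambda>_. 0)"
  unfolding br_def by (rule ext) simp

lemma br_zero_right: "br c m x (\<lambda>_. 0) = (\<lambda>_. 0)"
  unfolding br_def by (rule ext) simp

lemma br_add_left: "br c m (\<lambda>k. x k + y k) z = (\<lambda>k. br c m x z k + br c m y z k)"
  unfolding br_def by (auto simp: distrib_right sum.distrib)

lemma br_add_right: "br c m z (\<lambda>k. x k + y k) = (\<lambda>k. br c m z x k + br c m z y k)"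
  unfolding br_def by (auto simp: distrib_right distrib_left sum.distrib)

lemma br_antisym:
  assumes "is_lie_alg c m" "x \<in> vecs m" "y \<in> vecs m"
  shows "br c m x y = (\<lambda>k. - br c m y x k)"
proof -
  have alt: "br c m z z = (\<lambda>_. 0)" if "z \<in> vecs m" for z
    using assms(1) that unfolding is_lie_alg_def by blast
  have "br c m (\<lambda>k. x k + y k) (\<lambda>k. x k + y k) = (\<lambda>_. 0)"
    using assms(2,3) by (intro alt lin_closed_add[OF lin_closed_vecs])
  then have "(\<lambda>k. br c m x x k + br c m x y k + (br c m y x k + br c m y y k)) = (\<lambda>_. 0)"
    by (simp add: br_add_left br_add_right add.assoc)
  then have "(\<lambda>k. br c m x y k + br c m y x k) = (\<lambda>_. 0)"
    using alt[OF assms(2)] alt[OF assms(3)] by simp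
  then show ?thesis by (auto simp: fun_eq_iff add_eq_0_iff)
qed

lemma lin_closed_lcs: "lin_closed (lcs c m k)"
  by (cases k) (simp_all add: lin_closed_vecs lin_closed_lin_span)

lemma zero_in_lcs: "(\<lambda>_. 0) \<in> lcs c m k"
  by (rule lin_closed_zero[OF lin_closed_lcs])

lemma br_in_lcs_Suc: "x \<in> vecs m \<Longrightarrow> y \<in> lcs c m k \<Longrightarrow> br c m x y \<in> lcs c m (Suc k)"
  by (auto intro!: lin_span_base)

lemma lcs_Suc_subset: "lcs c m (Suc k) \<subseteq> lcs c m k"
proof (induction k)
  case 0
  show ?case
    by (auto intro!: lin_span_least[OF lin_closed_vecs] simp: br_in_vecs)
next
  case (Suc k)
  then show ?case
    by (subst (1 2) lcs.simps, intro lin_span_mono) blast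
qed

lemma lcs_antimono: "k \<le> k' \<Longrightarrow> lcs c m k' \<subseteq> lcs c m k"
  by (induction k' rule: dec_induct) (use lcs_Suc_subset in blast)+

lemma lcs_subset_vecs: "lcs c m k \<subseteq> vecs m"
  using lcs_antimono[of 0 k] by simp

lemma lcs_eq_zero_mono: "lcs c m k = {\<lambda>_. 0} \<Longrightarrow> k \<le> k' \<Longrightarrow> lcs c m k' = {\<lambda>_. 0}"
  using lcs_antimono[of k k' c m] zero_in_lcs[of c m k'] by blast

lemma lcs_Suc_eq_zero_if_br_zero:
  assumes "\<And>x y. x \<in> vecs m \<Longrightarrow> y \<in> lcs c m k \<Longrightarrow> br c m x y = (\<lambda>_. 0)"
  shows "lcs c m (Suc k) = {\<lambda>_. 0}"
  using assms by (auto intro!: lin_span_subset_zero)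

lemma adapted_lcs_Suc_gen_coord:
  assumes "adapted c m n" "v \<in> lcs c m (Suc k)" "i < n"
  shows "v i = 0"
proof -
  have "lcs c m 1 = lin_span (bvec ` {n..<m})"
    using assms(1) unfolding adapted_def by simp
  also have "\<dots> \<subseteq> {v. \<forall>i\<in>{..<n}. v i = 0}"
    by (rule lin_span_least[OF lin_closed_coords_zero]) (auto simp: bvec_def)
  finally have "lcs c m 1 \<subseteq> {v. \<forall>i\<in>{..<n}. v i = 0}" .
  then show ?thesis
    using lcs_antimono[of 1 "Suc k" c m] assms(2,3) by auto
qed

lemma adapted_nonabelian_gen_pos:
  assumes "adapted c m n" "nonabelian c m"
  shows "0 < n"
proof (rule ccontr)
  assume "\<not> 0 < n"
  have "subalgebra c m {\<lambda>_. 0}"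
    unfolding subalgebra_def subspace_of_def vecs_def by (simp add: br_zero_left)
  then have "generated c m {} \<subseteq> {\<lambda>_. 0}"
    unfolding generated_def by auto
  then have "lcs c m 0 = {\<lambda>_. 0}"
    using assms(1) \<open>\<not> 0 < n\<close> zero_in_lcs[of c m 0] unfolding adapted_def by auto
  then show False
    using assms(2) lcs_eq_zero_mono[of c m 0 1] unfolding nonabelian_def by simp
qed

lemma LEAST_conj_eq_max:
  fixes A B :: "nat \<Rightarrow> bool"
  assumes "\<exists>k. A k" "\<exists>k. B k"
    and "\<And>k k'. A k \<Longrightarrow> k \<le> k' \<Longrightarrow> A k'" "\<And>k k'. B k \<Longrightarrow> k \<le> k' \<Longrightarrow> B k'"
  shows "(LEAST k. A k \<and> B k) = max (LEAST k. A k) (LEAST k. B k)"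
proof (rule Least_equality)
  show "A (max (Least A) (Least B)) \<and> B (max (Least A) (Least B))"
    using assms(3)[OF LeastI_ex[OF assms(1)] max.cobounded1]
      assms(4)[OF LeastI_ex[OF assms(2)] max.cobounded2] by simp
qed (simp add: Least_le)

lemma lie_idealD:
  assumes "lie_ideal c m I"
  shows lie_ideal_subset_vecs: "I \<subseteq> vecs m"
    and lie_ideal_lin_closed: "lin_closed I"
    and lie_ideal_br_right: "x \<in> vecs m \<Longrightarrow> y \<in> I \<Longrightarrow> br c m x y \<in> I"
  using assms unfolding lie_ideal_def subspace_of_iff by blast+

lemma lie_ideal_br_left:
  assumes "is_lie_alg c m" "lie_ideal c m I" "x \<in> I" "y \<in> vecs m"
  shows "br c m x y \<in> I"
proof -
  have "x \<in> vecs m" using assms(2,3) lie_ideal_subset_vecs by blast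
  then have "br c m x y = (\<lambda>k. (-1) * br c m y x k)"
    using br_antisym[OF assms(1) _ assms(4)] by simp
  also have "\<dots> \<in> I"
    using assms(2-4) by (intro lin_closed_scale lie_ideal_lin_closed lie_ideal_br_right)
  finally show ?thesis .
qed

lemma derived_subset_ideal_sum:
  assumes lie: "is_lie_alg c m" and I: "lie_ideal c m I" and J: "lie_ideal c m J"
    and sum: "sum_set I J = vecs m" and J_lcs: "J \<subseteq> lcs c m k"
  shows "lcs c m 1 \<subseteq> sum_set I (J \<inter> lcs c m (Suc k))"
proof -
  have "br c m a b \<in> sum_set I (J \<inter> lcs c m (Suc k))" if ab: "a \<in> vecs m" "b \<in> vecs m" for a b
  proof -
    obtain aI aJ where a: "aI \<in> I" "aJ \<in> J" "a = (\<lambda>k. aI k + aJ k)"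
      using ab(1) unfolding sum[symmetric] by (rule sum_setE)
    obtain bI bJ where b: "bI \<in> I" "bJ \<in> J" "b = (\<lambda>k. bI k + bJ k)"
      using ab(2) unfolding sum[symmetric] by (rule sum_setE)
    have aJ: "aJ \<in> vecs m" using a(2) lie_ideal_subset_vecs[OF J] by blast
    have eq: "br c m a b = (\<lambda>k. (br c m aI b k + br c m aJ bI k) + br c m aJ bJ k)"
      unfolding a(3) b(3) br_add_left br_add_right by (simp add: add.assoc)
    have "(\<lambda>k. br c m aI b k + br c m aJ bI k) \<in> I"
      using a b ab aJ
      by (intro lin_closed_add lie_ideal_lin_closed[OF I] lie_ideal_br_left[OF lie I]
          lie_ideal_br_right[OF I])
    moreover have "br c m aJ bJ \<in> J \<inter> lcs c m (Suc k)"
      using lie_ideal_br_right[OF J aJ b(2)] br_in_lcs_Suc[OF aJ] J_lcs b(2) by blast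
    ultimately show ?thesis unfolding eq by (rule sum_setI)
  qed
  then show ?thesis
    unfolding One_nat_def lcs.simps(2)[of c m 0] lcs.simps(1)
    by (intro lin_span_least lin_closed_sum_set lie_ideal_lin_closed[OF I]
        lin_closed_Int lie_ideal_lin_closed[OF J] lin_closed_lcs) blast
qed

text \<open>Since I \<inter> J = 0, the previous lemma pushes J down the central descending series.\<close>
lemma direct_summand_in_lcs_1_eq_zero:
  assumes lie: "is_lie_alg c m" and nil: "nilpotent_lie c m"
    and I: "lie_ideal c m I" and J: "lie_ideal c m J"
    and IJ: "I \<inter> J = {\<lambda>_. 0}" and sum: "sum_set I J = vecs m" and J_lcs: "J \<subseteq> lcs c m 1"
  shows "J = {\<lambda>_. 0}"
proof -
  have "J \<subseteq> lcs c m k" for k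
  proof (induction k)
    case 0
    show ?case using lie_ideal_subset_vecs[OF J] by simp
  next
    case (Suc k)
    show ?case
    proof
      fix q assume "q \<in> J"
      then obtain s t where s: "s \<in> I" and t: "t \<in> J" "t \<in> lcs c m (Suc k)"
        and q: "q = (\<lambda>k. s k + t k)"
        using J_lcs derived_subset_ideal_sum[OF lie I J sum Suc] by (blast elim: sum_setE)
      have "s = (\<lambda>k. q k - t k)" using q by auto
      then have "s \<in> J" using lin_closed_diff[OF lie_ideal_lin_closed[OF J] \<open>q \<in> J\<close> t(1)] by simp
      then have "s = (\<lambda>_. 0)" using s IJ by blast
      then show "q \<in> lcs c m (Suc k)" using q t(2) by simp
    qed
  qed
  moreover obtain k where "lcs c m k = {\<lambda>_. 0}"
    using nil unfolding nilpotent_lie_def by blast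
  ultimately show ?thesis
    using lin_closed_zero[OF lie_ideal_lin_closed[OF J]] by blast
qed

lemma sum_window:
  fixes f :: "nat \<Rightarrow> complex"
  assumes "m1 + m2 \<le> M"
  shows "(\<Sum>a<M. if m1 \<le> a \<and> a < m1 + m2 then f (a - m1) else 0) = (\<Sum>a<m2. f a)"
proof -
  have "(\<Sum>a<M. if m1 \<le> a \<and> a < m1 + m2 then f (a - m1) else 0) = (\<Sum>a\<in>{m1..<m1 + m2}. f (a - m1))"
    using assms by (subst sum.inter_filter[symmetric]) (auto intro!: sum.cong)
  also have "\<dots> = (\<Sum>a<m2. f a)"
    by (simp add: sum.atLeastLessThan_shift_0[of _ m1] lessThan_atLeast0)
  finally show ?thesis .
qed

lemma sum2_window:
  fixes f :: "nat \<Rightarrow> nat \<Rightarrow> complex"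
  assumes "m1 + m2 \<le> M"
  shows "(\<Sum>a<M. \<Sum>b<M. if m1 \<le> a \<and> a < m1 + m2 \<and> m1 \<le> b \<and> b < m1 + m2
      then f (a - m1) (b - m1) else 0) = (\<Sum>a<m2. \<Sum>b<m2. f a b)"
proof -
  have "(\<Sum>b<M. if m1 \<le> a \<and> a < m1 + m2 \<and> m1 \<le> b \<and> b < m1 + m2 then f (a - m1) (b - m1) else 0)
      = (if m1 \<le> a \<and> a < m1 + m2 then \<Sum>b<m2. f (a - m1) b else 0)" for a
    using sum_window[OF assms, of "f (a - m1)"] by auto
  then show ?thesis
    using sum_window[OF assms, of "\<lambda>a. \<Sum>b<m2. f a b"] by simp
qed

lemma sum2_delta:
  fixes g :: "nat \<Rightarrow> nat \<Rightarrow> complex"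
  assumes "a < M" "b < M"
  shows "(\<Sum>i<M. \<Sum>j<M. if i = a \<and> j = b then g i j else 0) = g a b"
proof -
  have "(\<Sum>j<M. if i = a \<and> j = b then g i j else 0) = (if i = a then g i b else 0)" for i
    using assms(2) by (cases "i = a") simp_all
  then show ?thesis using assms(1) by simp
qed

lemma mult_add_eq_mult_add_iff:
  fixes a b c d n :: nat
  assumes "b < n" "d < n"
  shows "a * n + b = c * n + d \<longleftrightarrow> a = c \<and> b = d"
proof
  assume eq: "a * n + b = c * n + d"
  have "(a * n + b) div n = a" "(a * n + b) mod n = b"
    "(c * n + d) div n = c" "(c * n + d) mod n = d"
    using assms by simp_all
  then show "a = c \<and> b = d" using eq by metis
qed simp

lemma index_in_block:
  fixes i j n1 n2 :: nat
  assumes "i < n1" "j < n2"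
  shows "i * n2 + j < n1 * n2"
proof -
  have "i * n2 + j < (i + 1) * n2" using assms by simp
  also have "\<dots> \<le> n1 * n2" using assms by (intro mult_right_mono) auto
  finally show ?thesis .
qed

lemma block_index_cases:
  fixes p n1 n2 :: nat
  assumes "p < n1 * n2"
  obtains i j where "i < n1" "j < n2" "p = i * n2 + j"
proof
  show "p div n2 < n1" using assms by (simp add: less_mult_imp_div_less)
  show "p mod n2 < n2" using assms by (cases n2) auto
qed simp

section \<open>The product by generators\<close>

definition fst_part :: "nat \<Rightarrow> (nat \<Rightarrow> complex) \<Rightarrow> nat \<Rightarrow> complex" where
  "fst_part m1 x = (\<lambda>k. if k < m1 then x k else 0)"

definition snd_part :: "nat \<Rightarrow> nat \<Rightarrow> (nat \<Rightarrow> complex) \<Rightarrow> nat \<Rightarrow> complex" where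
  "snd_part m1 m2 x = (\<lambda>k. if k < m2 then x (m1 + k) else 0)"

definition snd_embed :: "nat \<Rightarrow> nat \<Rightarrow> (nat \<Rightarrow> complex) \<Rightarrow> nat \<Rightarrow> complex" where
  "snd_embed m1 m2 v = (\<lambda>k. if m1 \<le> k \<and> k < m1 + m2 then v (k - m1) else 0)"

text \<open>The coordinate of [x, y] along Z_(i n2 + j) is x_i y'_j - x'_j y_i, where the
  X'-coordinates of a vector sit at offset m1.\<close>
definition z_part :: "nat \<Rightarrow> nat \<Rightarrow> nat \<Rightarrow> nat \<Rightarrow>
    (nat \<Rightarrow> complex) \<Rightarrow> (nat \<Rightarrow> complex) \<Rightarrow> nat \<Rightarrow> complex" where
  "z_part m1 m2 n1 n2 x y = (\<lambda>k. if m1 + m2 \<le> k \<and> k < m1 + m2 + n1 * n2 then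
      x ((k - (m1 + m2)) div n2) * y (m1 + (k - (m1 + m2)) mod n2)
      - x (m1 + (k - (m1 + m2)) mod n2) * y ((k - (m1 + m2)) div n2) else 0)"

lemma z_part_index:
  assumes "i < n1" "j < n2"
  shows "z_part m1 m2 n1 n2 x y (m1 + m2 + i * n2 + j) = x i * y (m1 + j) - x (m1 + j) * y i"
  using index_in_block[OF assms] assms by (simp add: z_part_def)

lemma z_part_outside:
  "k < m1 + m2 \<or> m1 + m2 + n1 * n2 \<le> k \<Longrightarrow> z_part m1 m2 n1 n2 x y k = 0"
  by (auto simp: z_part_def)

lemma z_index_cases:
  fixes k m1 m2 n1 n2 :: nat
  obtains "k < m1 + m2 \<or> m1 + m2 + n1 * n2 \<le> k"
  | i j where "i < n1" "j < n2" "k = m1 + m2 + i * n2 + j"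
proof (cases "m1 + m2 \<le> k \<and> k < m1 + m2 + n1 * n2")
  case True
  then have "k - (m1 + m2) < n1 * n2" by linarith
  then obtain i j where "i < n1" "j < n2" "k - (m1 + m2) = i * n2 + j"
    by (rule block_index_cases)
  with True show ?thesis by (intro that(2)[of i j]) auto
qed (use that(1) in auto)

locale gen_product =
  fixes c1 :: "nat \<Rightarrow> nat \<Rightarrow> nat \<Rightarrow> complex" and m1 n1 :: nat
    and c2 :: "nat \<Rightarrow> nat \<Rightarrow> nat \<Rightarrow> complex" and m2 n2 :: nat
  assumes adapted1: "adapted c1 m1 n1" and adapted2: "adapted c2 m2 n2"
begin

abbreviation "P \<equiv> prod_gen c1 m1 n1 c2 m2 n2"
abbreviation "M \<equiv> m1 + m2 + n1 * n2"
abbreviation "bP \<equiv> br P M"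
abbreviation "pr1 \<equiv> fst_part m1"
abbreviation "pr2 \<equiv> snd_part m1 m2"
abbreviation "emb2 \<equiv> snd_embed m1 m2"
abbreviation "zpart \<equiv> z_part m1 m2 n1 n2"

lemma gens_le_dim: "n1 \<le> m1" "n2 \<le> m2"
  using adapted1 adapted2 unfolding adapted_def by auto

lemma prod_gen_fst:
  "k < m1 \<Longrightarrow> P a b k = (if a < m1 \<and> b < m1 then c1 a b k else 0)"
  using gens_le_dim unfolding prod_gen_def by auto

lemma prod_gen_snd:
  "m1 \<le> k \<Longrightarrow> k < m1 + m2 \<Longrightarrow> P a b k =
    (if m1 \<le> a \<and> a < m1 + m2 \<and> m1 \<le> b \<and> b < m1 + m2 then c2 (a - m1) (b - m1) (k - m1) else 0)"
  using gens_le_dim unfolding prod_gen_def by auto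

lemma prod_gen_z:
  assumes "i < n1" "j < n2"
  shows "P a b (m1 + m2 + i * n2 + j) =
    (if a = i \<and> b = m1 + j then 1 else if a = m1 + j \<and> b = i then -1 else 0)"
proof -
  have index_eq: "m1 + m2 + a' * n2 + (b' - m1) = m1 + m2 + i * n2 + j \<longleftrightarrow> a' = i \<and> b' = m1 + j"
    if "m1 \<le> b'" "b' < m1 + n2" for a' b'
    using mult_add_eq_mult_add_iff[of "b' - m1" n2 j a' i] that assms by auto
  show ?thesis
    using gens_le_dim assms index_eq[of b a] index_eq[of a b]
    unfolding prod_gen_def by auto
qed

lemma br_prod_fst: "k < m1 \<Longrightarrow> bP x y k = br c1 m1 (pr1 x) (pr1 y) k"
  using sum2_window[of 0 m1 M "\<lambda>a b. x a * y b * c1 a b k"]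
  by (simp add: br_def prod_gen_fst fst_part_def if_distrib cong: if_cong)

lemma br_prod_snd:
  "m1 \<le> k \<Longrightarrow> k < m1 + m2 \<Longrightarrow> bP x y k = br c2 m2 (pr2 x) (pr2 y) (k - m1)"
  using sum2_window[of m1 m2 M "\<lambda>a b. x (m1 + a) * y (m1 + b) * c2 a b (k - m1)"]
  by (simp add: br_def prod_gen_snd snd_part_def if_distrib cong: if_cong)

lemma br_prod_z:
  assumes "i < n1" "j < n2"
  shows "bP x y (m1 + m2 + i * n2 + j) = x i * y (m1 + j) - x (m1 + j) * y i"
proof -
  let ?k = "m1 + m2 + i * n2 + j"
  have lt: "i < M" "m1 + j < M" "?k < M"
    using assms gens_le_dim index_in_block[OF assms] by auto
  have "x a * y b * P a b ?k = (if a = i \<and> b = m1 + j then x a * y b else 0)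
      - (if a = m1 + j \<and> b = i then x a * y b else 0)" for a b
    using assms gens_le_dim by (auto simp: prod_gen_z[OF assms])
  then have "bP x y ?k = (\<Sum>a<M. \<Sum>b<M. if a = i \<and> b = m1 + j then x a * y b else 0)
      - (\<Sum>a<M. \<Sum>b<M. if a = m1 + j \<and> b = i then x a * y b else 0)"
    using lt by (simp add: br_def sum_subtractf)
  then show ?thesis
    using lt by (simp only: sum2_delta)
qed
lemma br_prod:
  "bP x y = (\<lambda>k. br c1 m1 (pr1 x) (pr1 y) k + emb2 (br c2 m2 (pr2 x) (pr2 y)) k + zpart x y k)"
proof
  fix k
  consider "k < m1" | "m1 \<le> k" "k < m1 + m2" | "M \<le> k"
    | i j where "i < n1" "j < n2" "k = m1 + m2 + i * n2 + j"
    by (rule z_index_cases[of k m1 m2 n1 n2]) (linarith | blast)+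
  then show "bP x y k = br c1 m1 (pr1 x) (pr1 y) k + emb2 (br c2 m2 (pr2 x) (pr2 y)) k + zpart x y k"
  proof cases
    case 1
    then show ?thesis by (simp add: br_prod_fst snd_embed_def z_part_outside)
  next
    case 2
    then show ?thesis by (simp add: br_prod_snd snd_embed_def z_part_outside br_def[of c1])
  next
    case 3
    then show ?thesis by (simp add: br_def snd_embed_def z_part_outside)
  next
    case (4 i j)
    then show ?thesis by (simp add: br_prod_z z_part_index snd_embed_def br_def[of c1])
  qed
qed

lemma lin_map_pr1: "lin_map pr1"
  unfolding lin_map_def fst_part_def by auto

lemma lin_map_pr2: "lin_map pr2"
  unfolding lin_map_def snd_part_def by auto

lemma lin_map_emb2: "lin_map emb2"
  unfolding lin_map_def snd_embed_def by auto

lemma pr1_in_vecs: "pr1 x \<in> vecs m1"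
  unfolding fst_part_def vecs_def by simp

lemma pr2_in_vecs: "pr2 x \<in> vecs m2"
  unfolding snd_part_def vecs_def by simp

lemma emb2_in_vecs: "emb2 v \<in> vecs M"
  unfolding snd_embed_def vecs_def by simp

lemma vecs_fst_subset: "vecs m1 \<subseteq> vecs M"
  unfolding vecs_def by auto

lemma pr1_id: "x \<in> vecs m1 \<Longrightarrow> pr1 x = x"
  unfolding fst_part_def vecs_def by auto

lemma pr2_fst: "x \<in> vecs m1 \<Longrightarrow> pr2 x = (\<lambda>_. 0)"
  unfolding snd_part_def vecs_def by auto

lemma pr1_emb2: "pr1 (emb2 v) = (\<lambda>_. 0)"
  unfolding fst_part_def snd_embed_def by auto

lemma pr2_emb2: "v \<in> vecs m2 \<Longrightarrow> pr2 (emb2 v) = v"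
  unfolding snd_part_def snd_embed_def vecs_def by auto

lemma pr1_br: "pr1 (bP x y) = br c1 m1 (pr1 x) (pr1 y)"
  by (auto simp: br_prod fst_part_def snd_embed_def z_part_def br_def[of c1])

lemma pr2_br: "pr2 (bP x y) = br c2 m2 (pr2 x) (pr2 y)"
  by (auto simp: br_prod snd_part_def snd_embed_def z_part_def br_def[of c1] br_def[of c2])

definition gen_free :: "(nat \<Rightarrow> complex) \<Rightarrow> bool" where
  "gen_free w \<longleftrightarrow> (\<forall>i<n1. w i = 0) \<and> (\<forall>j<n2. w (m1 + j) = 0)"

lemma lin_closed_gen_free: "lin_closed {w. gen_free w}"
  unfolding lin_closed_def gen_free_def by simp

lemma z_part_gen_free:
  assumes "gen_free w"
  shows "zpart x w = (\<lambda>_. 0)"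
proof
  fix k
  show "zpart x w k = 0"
    by (rule z_index_cases[of k m1 m2 n1 n2]) (use assms in \<open>auto simp: gen_free_def z_part_index z_part_outside\<close>)
qed

lemma z_part_self: "zpart x x = (\<lambda>_. 0)"
  unfolding z_part_def by (auto simp: mult.commute)

lemma gen_free_br: "gen_free (bP x y)"
proof -
  have "br c1 m1 (pr1 x) (pr1 y) \<in> lcs c1 m1 (Suc 0)"
    by (intro br_in_lcs_Suc) (simp_all add: pr1_in_vecs)
  then have "br c1 m1 (pr1 x) (pr1 y) i = 0" if "i < n1" for i
    using adapted_lcs_Suc_gen_coord[OF adapted1 _ that] by blast
  moreover have "br c2 m2 (pr2 x) (pr2 y) \<in> lcs c2 m2 (Suc 0)"
    by (intro br_in_lcs_Suc) (simp_all add: pr2_in_vecs)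
  then have "br c2 m2 (pr2 x) (pr2 y) j = 0" if "j < n2" for j
    using adapted_lcs_Suc_gen_coord[OF adapted2 _ that] by blast
  ultimately show ?thesis
    using gens_le_dim by (simp add: gen_free_def br_prod_fst br_prod_snd)
qed

lemma gen_free_lcs_Suc: "y \<in> lcs P M (Suc k) \<Longrightarrow> gen_free y"
  using lcs_antimono[of 1 "Suc k" P M] lin_span_least[OF lin_closed_gen_free, of "{bP x y | x y. x \<in> vecs M \<and> y \<in> vecs M}"]
    gen_free_br by auto

lemma br_prod_gen_free:
  "gen_free y \<Longrightarrow> bP x y = (\<lambda>k. br c1 m1 (pr1 x) (pr1 y) k + emb2 (br c2 m2 (pr2 x) (pr2 y)) k)"
  by (simp add: br_prod z_part_gen_free)

text \<open>Since brackets have no generator components, the Z-part disappears from double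
  brackets and the Jacobi identity splits into those of the two factors.\<close>
lemma is_lie_alg_prod:
  assumes lie1: "is_lie_alg c1 m1" and lie2: "is_lie_alg c2 m2"
  shows "is_lie_alg P M"
  unfolding is_lie_alg_def
proof (intro conjI ballI)
  fix x
  have "br c1 m1 (pr1 x) (pr1 x) = (\<lambda>_. 0)" "br c2 m2 (pr2 x) (pr2 x) = (\<lambda>_. 0)"
    using lie1 lie2 pr1_in_vecs pr2_in_vecs unfolding is_lie_alg_def by blast+
  then show "bP x x = (\<lambda>_. 0)"
    by (simp add: br_prod z_part_self snd_embed_def)
next
  fix x y z
  have double: "bP u (bP v w) = (\<lambda>k. br c1 m1 (pr1 u) (br c1 m1 (pr1 v) (pr1 w)) k
      + emb2 (br c2 m2 (pr2 u) (br c2 m2 (pr2 v) (pr2 w))) k)" for u v w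
    by (simp add: br_prod_gen_free[OF gen_free_br] pr1_br pr2_br)
  have jacobi1: "(\<lambda>k. br c1 m1 (pr1 x) (br c1 m1 (pr1 y) (pr1 z)) k
      + br c1 m1 (pr1 y) (br c1 m1 (pr1 z) (pr1 x)) k
      + br c1 m1 (pr1 z) (br c1 m1 (pr1 x) (pr1 y)) k) = (\<lambda>_. 0)"
    using lie1 pr1_in_vecs unfolding is_lie_alg_def by blast
  have jacobi2: "(\<lambda>k. br c2 m2 (pr2 x) (br c2 m2 (pr2 y) (pr2 z)) k
      + br c2 m2 (pr2 y) (br c2 m2 (pr2 z) (pr2 x)) k
      + br c2 m2 (pr2 z) (br c2 m2 (pr2 x) (pr2 y)) k) = (\<lambda>_. 0)"
    using lie2 pr2_in_vecs unfolding is_lie_alg_def by blast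
  show "(\<lambda>k. bP x (bP y z) k + bP y (bP z x) k + bP z (bP x y) k) = (\<lambda>_. 0)"
  proof
    fix k
    have "emb2 (br c2 m2 (pr2 x) (br c2 m2 (pr2 y) (pr2 z))) k + emb2 (br c2 m2 (pr2 y) (br c2 m2 (pr2 z) (pr2 x))) k
        + emb2 (br c2 m2 (pr2 z) (br c2 m2 (pr2 x) (pr2 y))) k = 0"
      using fun_cong[OF jacobi2, of "k - m1"] by (simp add: snd_embed_def)
    then show "bP x (bP y z) k + bP y (bP z x) k + bP z (bP x y) k = 0"
      using fun_cong[OF jacobi1, of k] unfolding double by (simp add: algebra_simps)
  qed
qed

lemma z_part_eq_zero_if_snd_zero:
  assumes "\<And>j. j < n2 \<Longrightarrow> x (m1 + j) = 0 \<and> y (m1 + j) = 0"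
  shows "zpart x y = (\<lambda>_. 0)"
proof
  fix k
  show "zpart x y k = 0"
    by (rule z_index_cases[of k m1 m2 n1 n2]) (use assms in \<open>auto simp: z_part_index z_part_outside\<close>)
qed

lemma z_part_eq_zero_if_fst_zero:
  assumes "\<And>i. i < n1 \<Longrightarrow> x i = 0 \<and> y i = 0"
  shows "zpart x y = (\<lambda>_. 0)"
proof
  fix k
  show "zpart x y k = 0"
    by (rule z_index_cases[of k m1 m2 n1 n2]) (use assms in \<open>auto simp: z_part_index z_part_outside\<close>)
qed

lemma br_prod_fst_vecs:
  assumes "x \<in> vecs m1" "y \<in> vecs m1"
  shows "bP x y = br c1 m1 x y"
proof -
  have "zpart x y = (\<lambda>_. 0)"
    using assms by (intro z_part_eq_zero_if_snd_zero) (simp add: vecs_def)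
  then show ?thesis
    using assms by (simp add: br_prod pr1_id pr2_fst br_zero_left snd_embed_def)
qed

lemma br_prod_emb2:
  assumes "v \<in> vecs m2" "w \<in> vecs m2"
  shows "bP (emb2 v) (emb2 w) = emb2 (br c2 m2 v w)"
proof -
  have "zpart (emb2 v) (emb2 w) = (\<lambda>_. 0)"
    using gens_le_dim by (intro z_part_eq_zero_if_fst_zero) (simp add: snd_embed_def)
  then show ?thesis
    using assms by (simp add: br_prod pr1_emb2 pr2_emb2 br_zero_left)
qed

lemma lcs_fst_subset: "lcs c1 m1 k \<subseteq> lcs P M k"
proof (induction k)
  case 0
  show ?case using vecs_fst_subset by simp
next
  case (Suc k)
  have "br c1 m1 x y \<in> lcs P M (Suc k)" if "x \<in> vecs m1" "y \<in> lcs c1 m1 k" for x y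
  proof -
    have "y \<in> vecs m1" using that(2) lcs_subset_vecs by blast
    then have "br c1 m1 x y = bP x y" using br_prod_fst_vecs that(1) by simp
    also have "\<dots> \<in> lcs P M (Suc k)"
      using that Suc vecs_fst_subset by (intro br_in_lcs_Suc) auto
    finally show ?thesis .
  qed
  then show ?case
    unfolding lcs.simps(2)[of c1 m1 k] by (intro lin_span_least[OF lin_closed_lcs]) blast
qed

lemma emb2_lcs_subset: "emb2 ` lcs c2 m2 k \<subseteq> lcs P M k"
proof (induction k)
  case 0
  show ?case using emb2_in_vecs by auto
next
  case (Suc k)
  have "emb2 (br c2 m2 v w) \<in> lcs P M (Suc k)" if "v \<in> vecs m2" "w \<in> lcs c2 m2 k" for v w
  proof -
    have "w \<in> vecs m2" using that(2) lcs_subset_vecs by blast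
    then have "emb2 (br c2 m2 v w) = bP (emb2 v) (emb2 w)" using br_prod_emb2 that(1) by simp
    also have "\<dots> \<in> lcs P M (Suc k)"
      using that Suc emb2_in_vecs by (intro br_in_lcs_Suc) auto
    finally show ?thesis .
  qed
  then show ?case
    unfolding lcs.simps(2)[of c2 m2 k]
    by (intro lin_span_image_subset[OF lin_map_emb2 lin_closed_lcs]) blast
qed

lemma pr1_lcs_subset: "pr1 ` lcs P M k \<subseteq> lcs c1 m1 k"
proof (induction k)
  case 0
  show ?case using pr1_in_vecs by auto
next
  case (Suc k)
  have "pr1 (bP x y) \<in> lcs c1 m1 (Suc k)" if "y \<in> lcs P M k" for x y
    using Suc that unfolding pr1_br by (intro br_in_lcs_Suc pr1_in_vecs) blast
  then show ?case
    unfolding lcs.simps(2)[of P M k]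
    by (intro lin_span_image_subset[OF lin_map_pr1 lin_closed_lcs]) blast
qed

lemma pr2_lcs_subset: "pr2 ` lcs P M k \<subseteq> lcs c2 m2 k"
proof (induction k)
  case 0
  show ?case using pr2_in_vecs by auto
next
  case (Suc k)
  have "pr2 (bP x y) \<in> lcs c2 m2 (Suc k)" if "y \<in> lcs P M k" for x y
    using Suc that unfolding pr2_br by (intro br_in_lcs_Suc pr2_in_vecs) blast
  then show ?case
    unfolding lcs.simps(2)[of P M k]
    by (intro lin_span_image_subset[OF lin_map_pr2 lin_closed_lcs]) blast
qed

lemma emb2_eq_zero_iff:
  assumes "v \<in> vecs m2"
  shows "emb2 v = (\<lambda>_. 0) \<longleftrightarrow> v = (\<lambda>_. 0)"
proof
  assume "emb2 v = (\<lambda>_. 0)"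
  then have "pr2 (emb2 v) = (\<lambda>_. 0)" by (simp add: lin_map_zero[OF lin_map_pr2])
  then show "v = (\<lambda>_. 0)" using pr2_emb2[OF assms] by simp
qed (simp add: lin_map_zero[OF lin_map_emb2])

lemma lcs_prod_Suc_Suc_eq_zero:
  assumes "lcs c1 m1 (Suc (Suc k)) = {\<lambda>_. 0}" "lcs c2 m2 (Suc (Suc k)) = {\<lambda>_. 0}"
  shows "lcs P M (Suc (Suc k)) = {\<lambda>_. 0}"
proof (rule lcs_Suc_eq_zero_if_br_zero)
  fix x y assume y: "y \<in> lcs P M (Suc k)"
  have "br c1 m1 (pr1 x) (pr1 y) \<in> lcs c1 m1 (Suc (Suc k))"
    using y pr1_lcs_subset by (blast intro: br_in_lcs_Suc pr1_in_vecs)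
  moreover have "br c2 m2 (pr2 x) (pr2 y) \<in> lcs c2 m2 (Suc (Suc k))"
    using y pr2_lcs_subset by (blast intro: br_in_lcs_Suc pr2_in_vecs)
  ultimately show "bP x y = (\<lambda>_. 0)"
    using assms gen_free_lcs_Suc[OF y]
    by (simp add: br_prod_gen_free lin_map_zero[OF lin_map_emb2])
qed

lemma lcs_prod_eq_zero_iff:
  assumes "nonabelian c1 m1"
  shows "lcs P M k = {\<lambda>_. 0} \<longleftrightarrow> lcs c1 m1 k = {\<lambda>_. 0} \<and> lcs c2 m2 k = {\<lambda>_. 0}"
proof
  assume P_zero: "lcs P M k = {\<lambda>_. 0}"
  have "lcs c1 m1 k \<subseteq> {\<lambda>_. 0}"
    using lcs_fst_subset P_zero by blast
  moreover have "lcs c2 m2 k \<subseteq> {\<lambda>_. 0}"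
  proof
    fix v assume v: "v \<in> lcs c2 m2 k"
    then have "emb2 v = (\<lambda>_. 0)" using emb2_lcs_subset P_zero by blast
    then show "v \<in> {\<lambda>_. 0}" using emb2_eq_zero_iff[of v] v lcs_subset_vecs by blast
  qed
  ultimately show "lcs c1 m1 k = {\<lambda>_. 0} \<and> lcs c2 m2 k = {\<lambda>_. 0}"
    using zero_in_lcs by blast
next
  assume zero: "lcs c1 m1 k = {\<lambda>_. 0} \<and> lcs c2 m2 k = {\<lambda>_. 0}"
  have "\<not> k \<le> 1"
  proof
    assume "k \<le> 1"
    then have "lcs c1 m1 1 = {\<lambda>_. 0}" using lcs_eq_zero_mono zero by blast
    with assms show False unfolding nonabelian_def by simp
  qed
  obtain k' where k: "k = Suc (Suc k')"
  proof
    show "k = Suc (Suc (k - 2))" using \<open>\<not> k \<le> 1\<close> by simp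
  qed
  show "lcs P M k = {\<lambda>_. 0}"
    using zero lcs_prod_Suc_Suc_eq_zero[of k'] unfolding k by blast
qed

lemma nilpotent_prod:
  assumes "nonabelian c1 m1" "nilpotent_lie c1 m1" "nilpotent_lie c2 m2"
  shows "nilpotent_lie P M"
proof -
  obtain k1 k2 where k1: "lcs c1 m1 k1 = {\<lambda>_. 0}" and k2: "lcs c2 m2 k2 = {\<lambda>_. 0}"
    using assms(2,3) unfolding nilpotent_lie_def by blast
  have "lcs c1 m1 (max k1 k2) = {\<lambda>_. 0}" "lcs c2 m2 (max k1 k2) = {\<lambda>_. 0}"
    using lcs_eq_zero_mono[OF k1] lcs_eq_zero_mono[OF k2] by simp_all
  then show ?thesis
    unfolding nilpotent_lie_def lcs_prod_eq_zero_iff[OF assms(1)] by blast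
qed

lemma nilindex_prod:
  assumes "nonabelian c1 m1" "nilpotent_lie c1 m1" "nilpotent_lie c2 m2"
  shows "nilindex P M = max (nilindex c1 m1) (nilindex c2 m2)"
  unfolding nilindex_def lcs_prod_eq_zero_iff[OF assms(1)]
proof (rule LEAST_conj_eq_max)
  show "\<exists>k. lcs c1 m1 k = {\<lambda>_. 0}" "\<exists>k. lcs c2 m2 k = {\<lambda>_. 0}"
    using assms(2,3) unfolding nilpotent_lie_def by blast+
qed (rule lcs_eq_zero_mono; assumption)+

subsection \<open>Nonsplitness\<close>

lemma bvec_z_eq_br:
  assumes "i < n1" "j < n2"
  shows "bvec (m1 + m2 + i * n2 + j) = bP (bvec i) (bvec (m1 + j))"
proof -
  have "pr1 (bvec (m1 + j)) = (\<lambda>_. 0)" "pr2 (bvec i) = (\<lambda>_. 0)"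
    using assms gens_le_dim by (auto simp: fst_part_def snd_part_def bvec_def)
  moreover have "zpart (bvec i) (bvec (m1 + j)) k = bvec (m1 + m2 + i * n2 + j) k" for k
  proof (rule z_index_cases[of k m1 m2 n1 n2])
    fix i' j' assume "i' < n1" "j' < n2" "k = m1 + m2 + i' * n2 + j'"
    then show ?thesis
      using assms gens_le_dim mult_add_eq_mult_add_iff[of j' n2 j i' i]
      by (auto simp: z_part_index bvec_def)
  qed (use index_in_block[OF assms] in \<open>auto simp: z_part_outside bvec_def\<close>)
  ultimately show ?thesis
    by (simp add: br_prod br_zero_left br_zero_right lin_map_zero[OF lin_map_emb2])
qed

lemma bvec_in_lcs_1:
  assumes "t < M" "\<not> t < n1" "\<not> (m1 \<le> t \<and> t < m1 + n2)"
  shows "bvec t \<in> lcs P M 1"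
proof -
  consider "t < m1" | "m1 \<le> t" "t < m1 + m2"
    | i j where "i < n1" "j < n2" "t = m1 + m2 + i * n2 + j"
    using assms(1) by (rule_tac z_index_cases[of t m1 m2 n1 n2]) (linarith | blast)+
  then show ?thesis
  proof cases
    case 1
    then have "bvec t \<in> lin_span (bvec ` {n1..<m1})"
      using assms(2) by (intro lin_span_base) auto
    also have "\<dots> = lcs c1 m1 1"
      using adapted1 unfolding adapted_def by simp
    finally show ?thesis
      using lcs_fst_subset by blast
  next
    case 2
    then have "bvec (t - m1) \<in> lin_span (bvec ` {n2..<m2})"
      using assms(3) by (intro lin_span_base imageI) auto
    also have "\<dots> = lcs c2 m2 1"
      using adapted2 unfolding adapted_def by simp
    finally have "emb2 (bvec (t - m1)) \<in> lcs P M 1"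
      using emb2_lcs_subset by blast
    moreover have "emb2 (bvec (t - m1)) = bvec t"
      using 2 by (auto simp: snd_embed_def bvec_def fun_eq_iff)
    ultimately show ?thesis by simp
  next
    case (3 i j)
    then have "bvec i \<in> vecs M" "bvec (m1 + j) \<in> lcs P M 0"
      using gens_le_dim by (auto intro: bvec_in_vecs)
    then show ?thesis
      using bvec_z_eq_br[OF 3(1,2)] 3(3) br_in_lcs_Suc[of "bvec i" M "bvec (m1 + j)" P 0] by simp
  qed
qed

lemma lcs_1_prod: "lcs P M 1 = {v \<in> vecs M. gen_free v}"
proof
  show "lcs P M 1 \<subseteq> {v \<in> vecs M. gen_free v}"
    unfolding One_nat_def using lcs_subset_vecs gen_free_lcs_Suc[of _ 0] by blast
next
  show "{v \<in> vecs M. gen_free v} \<subseteq> lcs P M 1"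
  proof (intro subsetI, elim CollectE conjE)
    fix v assume v: "v \<in> vecs M" "gen_free v"
    show "v \<in> lcs P M 1"
    proof (rule mem_lin_closed_if_support[OF lin_closed_lcs v(1)])
      fix t assume "t < M" "v t \<noteq> 0"
      moreover have "\<not> t < n1"
        using v(2) \<open>v t \<noteq> 0\<close> unfolding gen_free_def by auto
      moreover have "\<not> (m1 \<le> t \<and> t < m1 + n2)"
      proof
        assume t: "m1 \<le> t \<and> t < m1 + n2"
        then have "t - m1 < n2" by linarith
        then have "v (m1 + (t - m1)) = 0" using v(2) unfolding gen_free_def by blast
        with t \<open>v t \<noteq> 0\<close> show False by simp
      qed
      ultimately show "bvec t \<in> lcs P M 1" by (intro bvec_in_lcs_1)
    qed
  qed
qed

definition gen_commute :: "(nat \<Rightarrow> complex) \<Rightarrow> (nat \<Rightarrow> complex) \<Rightarrow> bool" where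
  "gen_commute p q \<longleftrightarrow> (\<forall>i<n1. \<forall>j<n2. p i * q (m1 + j) = q i * p (m1 + j))"

lemma gen_commuteD:
  "gen_commute p q \<Longrightarrow> i < n1 \<Longrightarrow> j < n2 \<Longrightarrow> p i * q (m1 + j) = q i * p (m1 + j)"
  unfolding gen_commute_def by blast

lemma gen_commute_sym: "gen_commute p q \<Longrightarrow> gen_commute q p"
  unfolding gen_commute_def by (simp add: mult.commute)

lemma gen_commute_if_br_eq_zero:
  assumes "bP p q = (\<lambda>_. 0)"
  shows "gen_commute p q"
  unfolding gen_commute_def
proof (intro allI impI)
  fix i j assume "i < n1" "j < n2"
  then have "p i * q (m1 + j) - p (m1 + j) * q i = 0"
    using br_prod_z[of i j p q] assms by simp
  then show "p i * q (m1 + j) = q i * p (m1 + j)"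
    by (simp add: mult.commute)
qed

lemma gen_commute_if_ideals:
  assumes lie: "is_lie_alg P M" and I: "lie_ideal P M I" and J: "lie_ideal P M J"
    and IJ: "I \<inter> J = {\<lambda>_. 0}" and "p \<in> I" "q \<in> J"
  shows "gen_commute p q"
proof (rule gen_commute_if_br_eq_zero)
  have "bP p q \<in> I \<inter> J"
    using assms(5,6) lie_ideal_subset_vecs[OF I] lie_ideal_subset_vecs[OF J]
    by (blast intro: lie_ideal_br_left[OF lie I] lie_ideal_br_right[OF J])
  then show "bP p q = (\<lambda>_. 0)" using IJ by blast
qed

lemma gen_free_if_gen_commute_basis:
  assumes "0 < n1" "0 < n2"
    and x: "x 0 = 1" "x m1 = 0" "gen_commute x q"
    and u: "u 0 = 0" "u m1 = 1" "gen_commute u q"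
  shows "gen_free q"
proof -
  have q0: "q 0 = 0"
    using gen_commuteD[OF u(3) assms(1,2)] u(1,2) by simp
  have q'j: "q (m1 + j) = 0" if "j < n2" for j
    using gen_commuteD[OF x(3) assms(1) that] x(1) q0 by simp
  have "q i = 0" if "i < n1" for i
    using gen_commuteD[OF u(3) that assms(2)] u(2) q'j[OF assms(2)] by simp
  with q'j show ?thesis unfolding gen_free_def by blast
qed

text \<open>Here X_1 = bvec 0 and X'_1 = bvec m1. The relations for the pairs (x, y), (u, w), (x, w)
  and (u, y) at the coordinates 0 and m1 force x m1 = u 0 = 0 and x 0 = u m1 \<in> {0, 1}, so one
  summand contains vectors that look like X_1 and X'_1 at these coordinates.\<close>
lemma gen_free_summand:
  assumes pos: "0 < n1" "0 < n2"
    and comm: "\<And>p q. p \<in> I \<Longrightarrow> q \<in> J \<Longrightarrow> gen_commute p q"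
    and xy: "x \<in> I" "y \<in> J" "bvec 0 = (\<lambda>k. x k + y k)"
    and uw: "u \<in> I" "w \<in> J" "bvec m1 = (\<lambda>k. u k + w k)"
  shows "(\<forall>q\<in>J. gen_free q) \<or> (\<forall>q\<in>I. gen_free q)"
proof -
  have "0 < m1" using pos gens_le_dim by simp
  then have y: "y 0 = 1 - x 0" "y m1 = - x m1" and w: "w 0 = - u 0" "w m1 = 1 - u m1"
    using fun_cong[OF xy(3), of 0] fun_cong[OF xy(3), of m1]
      fun_cong[OF uw(3), of 0] fun_cong[OF uw(3), of m1]
    by (auto simp: bvec_def eq_neg_iff_add_eq_0 eq_diff_eq add.commute)
  have rel: "p 0 * q m1 = q 0 * p m1" if "p \<in> I" "q \<in> J" for p q
    using gen_commuteD[OF comm[OF that] pos] by simp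
  have "x m1 = 0"
    using rel[OF xy(1,2)] unfolding y by (simp add: algebra_simps)
  moreover have "u 0 = 0"
    using rel[OF uw(1,2)] unfolding w by (simp add: algebra_simps)
  moreover have "x 0 * (1 - u m1) = 0" "(1 - x 0) * u m1 = 0"
    using rel[OF xy(1) uw(2)] rel[OF uw(1) xy(2)] \<open>x m1 = 0\<close> \<open>u 0 = 0\<close>
    unfolding y w by simp_all
  then have "x 0 = u m1" "x 0 = 0 \<or> x 0 = 1"
    by (simp_all add: algebra_simps) auto
  ultimately consider "x 0 = 1" "x m1 = 0" "u 0 = 0" "u m1 = 1"
    | "y 0 = 1" "y m1 = 0" "w 0 = 0" "w m1 = 1"
    unfolding y w by auto
  then show ?thesis
  proof cases
    case 1
    then have "\<forall>q\<in>J. gen_free q"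
      using comm xy(1) uw(1) by (blast intro: gen_free_if_gen_commute_basis[OF pos])
    then show ?thesis ..
  next
    case 2
    then have "\<forall>q\<in>I. gen_free q"
      using comm xy(2) uw(2) by (blast intro: gen_free_if_gen_commute_basis[OF pos] gen_commute_sym)
    then show ?thesis ..
  qed
qed

lemma nonsplit_prod:
  assumes "is_lie_alg c1 m1" "is_lie_alg c2 m2" "nonabelian c1 m1" "nonabelian c2 m2"
    and "nilpotent_lie c1 m1" "nilpotent_lie c2 m2"
  shows "nonsplit P M"
  unfolding nonsplit_def sum_set_def[symmetric]
proof (intro notI, elim exE conjE)
  fix I J assume I: "lie_ideal P M I" and J: "lie_ideal P M J"
    and nonzero: "I \<noteq> {\<lambda>_. 0}" "J \<noteq> {\<lambda>_. 0}"
    and IJ: "I \<inter> J = {\<lambda>_. 0}" and sum: "sum_set I J = vecs M"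
  have lie: "is_lie_alg P M" and nil: "nilpotent_lie P M"
    using assms is_lie_alg_prod nilpotent_prod by blast+
  have "gen_commute p q" if "p \<in> I" "q \<in> J" for p q
    using gen_commute_if_ideals[OF lie I J IJ that] .
  moreover have pos: "0 < n1" "0 < n2"
    using adapted_nonabelian_gen_pos adapted1 adapted2 assms(3,4) by blast+
  moreover have "bvec 0 \<in> sum_set I J" "bvec m1 \<in> sum_set I J"
    unfolding sum using pos gens_le_dim by (auto intro: bvec_in_vecs)
  then obtain x y u w where "x \<in> I" "y \<in> J" "bvec 0 = (\<lambda>k. x k + y k)"
    and "u \<in> I" "w \<in> J" "bvec m1 = (\<lambda>k. u k + w k)"
    by (elim sum_setE)
  ultimately consider "\<forall>q\<in>J. gen_free q" | "\<forall>q\<in>I. gen_free q"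
    using gen_free_summand by blast
  then show False
  proof cases
    case 1
    then have "J \<subseteq> lcs P M 1" using lcs_1_prod lie_ideal_subset_vecs[OF J] by blast
    then show False
      using direct_summand_in_lcs_1_eq_zero[OF lie nil I J IJ sum] nonzero(2) by blast
  next
    case 2
    then have "I \<subseteq> lcs P M 1" using lcs_1_prod lie_ideal_subset_vecs[OF I] by blast
    moreover have "J \<inter> I = {\<lambda>_. 0}" "sum_set J I = vecs M"
      using IJ sum by (simp_all add: Int_commute sum_set_commute)
    ultimately show False
      using direct_summand_in_lcs_1_eq_zero[OF lie nil J I] nonzero(1) by blast
  qed
qed

end

theorem mainTheorem4:
  fixes c1 c2 :: "nat \<Rightarrow> nat \<Rightarrow> nat \<Rightarrow> complex" and m1 m2 n1 n2 :: nat
  assumes "is_lie_alg c1 m1" and "nilpotent_lie c1 m1" and "nonabelian c1 m1"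
      and "adapted c1 m1 n1" and "nonsplit c1 m1"
      and "is_lie_alg c2 m2" and "nilpotent_lie c2 m2" and "nonabelian c2 m2"
      and "adapted c2 m2 n2" and "nonsplit c2 m2"
  shows "is_lie_alg (prod_gen c1 m1 n1 c2 m2 n2) (m1 + m2 + n1 * n2)
       \<and> nilpotent_lie (prod_gen c1 m1 n1 c2 m2 n2) (m1 + m2 + n1 * n2)
       \<and> nonsplit (prod_gen c1 m1 n1 c2 m2 n2) (m1 + m2 + n1 * n2)
       \<and> nilindex (prod_gen c1 m1 n1 c2 m2 n2) (m1 + m2 + n1 * n2)
           = max (nilindex c1 m1) (nilindex c2 m2)"
proof -
  \<comment> \<open>The factors need not be nonsplit.\<close>
  interpret gen_product c1 m1 n1 c2 m2 n2
    using assms(4,9) by unfold_locales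
  show ?thesis
    using assms is_lie_alg_prod nilpotent_prod nonsplit_prod nilindex_prod by blast
qed

end
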